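(* Let $p,q$ be coprime positive integers with $q\ge 2$. Let $(F_n)_{n\ge0}$ and $(G_n)_{n\ge0}$ be sequences of rational numbers, neither identically zero, each satisfying $X_n=\frac{p}{q}X_{n-1}-X_{n-2}$ for all $n\ge2$. Write $F_n=\frac{f_n}{f_n'}$ and $G_n=\frac{g_n}{g_n'}$ in reduced form. If $F_0G_1-F_1G_0\neq 0$, then $\gcd(f_n,g_n)$ is bounded independently of $n$. *)

theory Defs
  imports Complex_Main
begin

definition num_of :: "rat \<Rightarrow> int" where
  "num_of x = fst (quotient_of x)"

end

theory Submission
  imports Defs
begin

(* Let W = F 0 * G 1 - F 1 * G 0 and let s be the solution of the recurrence with s 0 = 0,
   s 1 = 1; then s n = U n * q / q^n for the Lucas sequence U of (p, q^2).  The Casoratian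
   identities  F 0 * G n - G 0 * F n = s n * W  and  F 1 * G (n+1) - G 1 * F (n+1) = s n * W
   have integer combinations of F n and G n on the left.  A common divisor of the numerators
   of F n and G n is coprime to their denominators, so after clearing denominators it
   divides both U (n+1) * q * N and U n * q * N, where N is the integer W * (product of the
   denominators of F 0, F 1, G 0, G 1).  Consecutive Lucas numbers are coprime because p and
   q are, so the common divisor divides q * N. *)

definition den_of :: "rat \<Rightarrow> int" where
  "den_of x = snd (quotient_of x)"

lemma quotient_of_num_den: "quotient_of x = (num_of x, den_of x)"
  by (simp add: num_of_def den_of_def)

lemma rat_eq_num_div_den: "x = of_int (num_of x) / of_int (den_of x)"
  using quotient_of_div[OF quotient_of_num_den] .

lemma den_of_pos: "den_of x > 0"
  using quotient_of_denom_pos[OF quotient_of_num_den] .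

lemma coprime_num_of_den_of: "coprime (num_of x) (den_of x)"
  using quotient_of_coprime[OF quotient_of_num_den] .

lemma den_of_mult_eq_num_of: "of_int (den_of x) * x = of_int (num_of x)"
  using den_of_pos[of x] by (subst (2) rat_eq_num_div_den) simp

lemma cross_mult_if_mult_eq:
  assumes "of_int b * x = of_int a"
  shows "num_of x * b = a * den_of x"
proof -
  have "(of_int (num_of x * b) :: rat) = of_int b * (of_int (den_of x) * x)"
    by (simp add: den_of_mult_eq_num_of)
  also have "\<dots> = of_int (a * den_of x)"
    using assms by (simp add: ac_simps)
  finally show ?thesis by (simp only: of_int_eq_iff)
qed

lemma num_of_dvd_if_mult_eq:
  assumes "of_int b * x = of_int a"
  shows "num_of x dvd a"
proof -
  have "num_of x dvd a * den_of x"
    using cross_mult_if_mult_eq[OF assms] by (metis dvd_triv_left)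
  then show ?thesis
    using coprime_num_of_den_of coprime_dvd_mult_left_iff by blast
qed

lemma dvd_num_of_if_mult_eq:
  assumes "coprime d b" and "d dvd a" and "of_int b * x = of_int a"
  shows "d dvd num_of x"
proof -
  have "d dvd num_of x * b"
    using cross_mult_if_mult_eq[OF assms(3)] assms(2) by simp
  then show ?thesis using assms(1) coprime_dvd_mult_left_iff by blast
qed

lemma dvd_num_of_int_lincomb:
  assumes "d dvd num_of x" and "d dvd num_of y"
  shows "d dvd num_of (of_int k * x + of_int l * y)"
proof (rule dvd_num_of_if_mult_eq)
  show "coprime d (den_of x * den_of y)"
    using assms coprime_num_of_den_of
    by (meson coprime_divisors coprime_mult_right_iff dvd_refl)
  show "d dvd k * num_of x * den_of y + l * num_of y * den_of x"
    using assms by simp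
  show "of_int (den_of x * den_of y) * (of_int k * x + of_int l * y)
      = of_int (k * num_of x * den_of y + l * num_of y * den_of x)"
    using den_of_pos[of x] den_of_pos[of y]
    by (subst (1 2) rat_eq_num_div_den) (simp add: field_simps)
qed

lemma gcd_num_of_dvd_if_cross_eq:
  assumes "of_int (den_of x0 * den_of y0 * e) * (x0 * y - y0 * x) = of_int a"
  shows "gcd (num_of x) (num_of y) dvd a"
proof -
  define z where "z = of_int (num_of x0 * den_of y0) * y + of_int (- (num_of y0 * den_of x0)) * x"
  have "gcd (num_of x) (num_of y) dvd num_of z"
    unfolding z_def by (intro dvd_num_of_int_lincomb) simp_all
  also have "num_of z dvd a"
  proof (rule num_of_dvd_if_mult_eq)
    have "z = of_int (den_of x0 * den_of y0) * (x0 * y - y0 * x)"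
      unfolding z_def using den_of_pos[of x0] den_of_pos[of y0]
      by (subst (3 4) rat_eq_num_div_den) (simp add: field_simps)
    then show "of_int e * z = of_int a"
      using assms by (simp only: of_int_mult ac_simps)
  qed
  finally show ?thesis .
qed

definition solves_rec :: "'a::comm_ring \<Rightarrow> (nat \<Rightarrow> 'a) \<Rightarrow> bool" where
  "solves_rec r X \<longleftrightarrow> (\<forall>n. X (n + 2) = r * X (n + 1) - X n)"

lemma solves_rec_diff:
  assumes "solves_rec r X" and "solves_rec r Y"
  shows "solves_rec r (\<lambda>n. a * X n - b * Y n)"
  using assms unfolding solves_rec_def by (simp add: right_diff_distrib mult.left_commute)

lemma solves_rec_mult_const:
  assumes "solves_rec r X"
  shows "solves_rec r (\<lambda>n. X n * c)"
  using assms unfolding solves_rec_def by (simp add: left_diff_distrib mult.assoc)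

lemma solves_rec_shift:
  assumes "solves_rec r X"
  shows "solves_rec r (\<lambda>n. X (Suc n))"
  using assms unfolding solves_rec_def by simp

lemma solves_rec_unique:
  assumes "solves_rec r X" and "solves_rec r Y" and "X 0 = Y 0" and "X 1 = Y 1"
  shows "X n = Y n"
proof -
  have "X n = Y n \<and> X (Suc n) = Y (Suc n)"
  proof (induction n)
    case 0
    then show ?case using assms(3,4) by simp
  next
    case (Suc n)
    then show ?case
      using assms(1,2) unfolding solves_rec_def by (metis add_2_eq_Suc' Suc_eq_plus1)
  qed
  then show ?thesis ..
qed

lemma solves_rec_casoratian:
  fixes F G s :: "nat \<Rightarrow> 'a::comm_ring_1"
  assumes F: "solves_rec r F" and G: "solves_rec r G"
    and s: "solves_rec r s" "s 0 = 0" "s 1 = 1"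
  shows "F 0 * G n - G 0 * F n = s n * (F 0 * G 1 - F 1 * G 0)"
    and "F 1 * G (Suc n) - G 1 * F (Suc n) = s n * (F 0 * G 1 - F 1 * G 0)"
proof -
  show "F 0 * G n - G 0 * F n = s n * (F 0 * G 1 - F 1 * G 0)"
    by (rule solves_rec_unique[OF solves_rec_diff[OF G F] solves_rec_mult_const[OF s(1)]])
      (use s(2,3) in \<open>simp_all add: algebra_simps\<close>)
  have F2: "F 2 = r * F 1 - F 0" and G2: "G 2 = r * G 1 - G 0"
    using F G unfolding solves_rec_def by (metis add_0)+
  have "F 1 * G 2 - G 1 * F 2 = F 0 * G 1 - F 1 * G 0"
    unfolding F2 G2 by (simp add: algebra_simps)
  moreover have "solves_rec r (\<lambda>n. F 1 * G (Suc n) - G 1 * F (Suc n))"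
    using solves_rec_diff[OF solves_rec_shift[OF G] solves_rec_shift[OF F]] .
  ultimately show "F 1 * G (Suc n) - G 1 * F (Suc n) = s n * (F 0 * G 1 - F 1 * G 0)"
    using solves_rec_unique[OF _ solves_rec_mult_const[OF s(1)]] s(2,3)
    by (simp add: numeral_2_eq_2)
qed

fun lucas_U :: "int \<Rightarrow> int \<Rightarrow> nat \<Rightarrow> int" where
  "lucas_U P Q 0 = 0"
| "lucas_U P Q (Suc 0) = 1"
| "lucas_U P Q (Suc (Suc n)) = P * lucas_U P Q (Suc n) - Q * lucas_U P Q n"

lemma coprime_diff_mult_left_iff: "coprime (a - c * b) c \<longleftrightarrow> coprime a (c::int)"
proof -
  have "gcd c ((- b) * c + a) = gcd c a" by (rule gcd_add_mult)
  then show ?thesis by (simp add: coprime_iff_gcd_eq_1 gcd.commute mult.commute)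
qed

lemma coprime_lucas_U_Suc_Q:
  assumes "coprime P Q"
  shows "coprime (lucas_U P Q (Suc n)) Q"
proof (induction n)
  case 0
  then show ?case by simp
next
  case (Suc n)
  then have "coprime (P * lucas_U P Q (Suc n)) Q" using assms by simp
  then show ?case by (simp add: coprime_diff_mult_left_iff)
qed

lemma coprime_lucas_U_Suc:
  assumes "coprime P Q"
  shows "coprime (lucas_U P Q (Suc n)) (lucas_U P Q n)"
proof (induction n)
  case 0
  then show ?case by simp
next
  case (Suc n)
  have "coprime (Q * lucas_U P Q n) (lucas_U P Q (Suc n))"
    using Suc coprime_lucas_U_Suc_Q[OF assms, of n] by (simp add: coprime_commute)
  then have "coprime (- (Q * lucas_U P Q n) - lucas_U P Q (Suc n) * (- P)) (lucas_U P Q (Suc n))"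
    by (simp only: coprime_diff_mult_left_iff coprime_minus_left_iff)
  then show ?case by (simp add: algebra_simps)
qed

lemma solves_rec_lucas_U:
  assumes "q \<noteq> 0"
  shows "solves_rec (of_int p / of_int q)
    (\<lambda>n. of_int (lucas_U p (q\<^sup>2) n) * of_int q / of_int q ^ n :: 'a::field_char_0)"
  using assms unfolding solves_rec_def by (simp add: field_simps power2_eq_square)

definition casoratian_num :: "(nat \<Rightarrow> rat) \<Rightarrow> (nat \<Rightarrow> rat) \<Rightarrow> int" where
  "casoratian_num F G =
     num_of (F 0) * num_of (G 1) * den_of (G 0) * den_of (F 1)
   - num_of (F 1) * num_of (G 0) * den_of (F 0) * den_of (G 1)"

lemma casoratian_num_eq:
  "of_int (den_of (F 0) * den_of (G 0) * den_of (F 1) * den_of (G 1)) * (F 0 * G 1 - F 1 * G 0)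
     = of_int (casoratian_num F G)"
  unfolding casoratian_num_def of_int_mult of_int_diff den_of_mult_eq_num_of[symmetric]
  by (simp add: algebra_simps)

lemma gcd_num_of_solutions_dvd:
  assumes "q \<noteq> 0" and "coprime p q"
    and F: "solves_rec (of_int p / of_int q) F" and G: "solves_rec (of_int p / of_int q) G"
  shows "gcd (num_of (F (Suc m))) (num_of (G (Suc m))) dvd q * casoratian_num F G"
proof -
  define U where "U = lucas_U p (q\<^sup>2)"
  define s where "s n = (of_int (U n) * of_int q / of_int q ^ n :: rat)" for n
  define D where "D = den_of (F 0) * den_of (G 0) * den_of (F 1) * den_of (G 1)"
  define N where "N = casoratian_num F G"
  have s: "solves_rec (of_int p / of_int q) s" "s 0 = 0" "s 1 = 1"
    using solves_rec_lucas_U[OF assms(1)] assms(1) unfolding s_def U_def by simp_all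
  have scale: "of_int (q ^ k) * s k = of_int (U k * q)" for k
    unfolding s_def using assms(1) by simp
  have W: "of_int D * (F 0 * G 1 - F 1 * G 0) = of_int N"
    unfolding D_def N_def by (rule casoratian_num_eq)
  have dvd_U: "gcd (num_of x) (num_of y) dvd U k * q * N"
    if "x0 * y - y0 * x = s k * (F 0 * G 1 - F 1 * G 0)" and "den_of x0 * den_of y0 * e = D"
    for x0 y0 x y :: rat and k e
  proof (rule gcd_num_of_dvd_if_cross_eq)
    have "of_int (den_of x0 * den_of y0 * (q ^ k * e)) * (x0 * y - y0 * x)
        = of_int (q ^ k) * s k * (of_int (den_of x0 * den_of y0 * e) * (F 0 * G 1 - F 1 * G 0))"
      unfolding that(1) by (simp only: of_int_mult ac_simps)
    then show "of_int (den_of x0 * den_of y0 * (q ^ k * e)) * (x0 * y - y0 * x)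
        = of_int (U k * q * N)"
      unfolding that(2) scale W by simp
  qed
  note casoratian = solves_rec_casoratian[OF F G s]
  have "gcd (num_of (F (Suc m))) (num_of (G (Suc m))) dvd gcd (q * N * U (Suc m)) (q * N * U m)"
    using dvd_U[OF casoratian(1), of "den_of (F 1) * den_of (G 1)"]
      dvd_U[OF casoratian(2), of "den_of (F 0) * den_of (G 0)"]
    by (simp add: D_def ac_simps)
  also have "gcd (q * N * U (Suc m)) (q * N * U m) = \<bar>q * N\<bar>"
    using coprime_lucas_U_Suc[of p "q\<^sup>2" m] assms(2) unfolding U_def
    by (simp add: gcd_mult_left)
  finally show ?thesis unfolding N_def by simp
qed

theorem lemma3p3:
  fixes p q :: int and F G :: "nat \<Rightarrow> rat"
  assumes "p > 0" and "q \<ge> 2" and "coprime p q"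
    and "\<exists>n. F n \<noteq> 0" and "\<exists>n. G n \<noteq> 0"
    and "\<And>n. F (n + 2) = (of_int p / of_int q) * F (n + 1) - F n"
    and "\<And>n. G (n + 2) = (of_int p / of_int q) * G (n + 1) - G n"
    and "F 0 * G 1 - F 1 * G 0 \<noteq> 0"
  shows "\<exists>B::int. \<forall>n. gcd (num_of (F n)) (num_of (G n)) \<le> B"
proof -
  \<comment> \<open>Of the side conditions only q \<noteq> 0 matters.\<close>
  define N where "N = casoratian_num F G"
  have q: "q \<noteq> 0" using assms(2) by simp
  have "N \<noteq> 0"
    using casoratian_num_eq[of F G] assms(8) den_of_pos unfolding N_def
    by (metis mult_eq_0_iff of_int_0 of_int_eq_0_iff less_irrefl)
  have "solves_rec (of_int p / of_int q) F" and "solves_rec (of_int p / of_int q) G"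
    using assms(6,7) unfolding solves_rec_def by blast+
  then have "gcd (num_of (F (Suc m))) (num_of (G (Suc m))) \<le> \<bar>q * N\<bar>" for m
    using gcd_num_of_solutions_dvd[OF q assms(3), of F G m] q \<open>N \<noteq> 0\<close>
    unfolding N_def by (metis abs_ge_self dvd_imp_le_int mult_eq_0_iff order_trans)
  then have "gcd (num_of (F n)) (num_of (G n)) \<le> max \<bar>q * N\<bar> (gcd (num_of (F 0)) (num_of (G 0)))"
    for n by (cases n) (simp_all add: le_max_iff_disj)
  then show ?thesis by blast
qed

end
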